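(* For all $\alpha\ge1$ and $a,b\ge0$, $$|\gamma(\alpha,a)-\gamma(\alpha,b)|\ge|a-b|(ab)^{\frac{\alpha-1}{2}}e^{-\frac{a+b}{2}},$$ where $\gamma(\alpha,x)=\int_0^x t^{\alpha-1}e^{-t}\,dt$ is the lower incomplete gamma function. *)

theory Defs
  imports "HOL-Analysis.Analysis"
begin

(* real power with the convention 0^0 = 1 (Isabelle's powr has 0 powr 0 = 0) *)
definition rpow :: "real \<Rightarrow> real \<Rightarrow> real" where
  "rpow x y = (if y = 0 then 1 else x powr y)"

definition lower_inc_gamma :: "real \<Rightarrow> real \<Rightarrow> real" where
  "lower_inc_gamma \<alpha> x = integral {0..x} (\<lambda>t. rpow t (\<alpha> - 1) * exp (- t))"

end

theory Submission
  imports Defs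
begin

text \<open>
  Write \<open>f t = t powr (\<alpha> - 1) * exp (- t)\<close> and let \<open>0 \<le> a \<le> b\<close>. Pairing \<open>t\<close> with its
  mirror image \<open>a + b - t\<close> shows that \<open>\<gamma>(\<alpha>, b) - \<gamma>(\<alpha>, a)\<close> is the integral over \<open>[a, b]\<close>
  of \<open>(f t + f (a + b - t)) / 2\<close>. On \<open>[a, b]\<close> we have \<open>t (a + b - t) \<ge> a b\<close>, so for \<open>\<alpha> \<ge> 1\<close>
  the product \<open>f t * f (a + b - t)\<close> is at least \<open>(a b) powr (\<alpha> - 1) * exp (- (a + b))\<close>, and by
  AM-GM the averaged integrand is at least \<open>(a b) powr ((\<alpha> - 1) / 2) * exp (- (a + b) / 2)\<close>.
\<close>

lemma rpow_nonneg: "0 \<le> rpow x e"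
  by (simp add: rpow_def)

lemma rpow_mult: "0 \<le> x \<Longrightarrow> 0 \<le> y \<Longrightarrow> rpow (x * y) e = rpow x e * rpow y e"
  by (simp add: rpow_def powr_mult)

lemma rpow_mono: "0 \<le> x \<Longrightarrow> x \<le> y \<Longrightarrow> 0 \<le> e \<Longrightarrow> rpow x e \<le> rpow y e"
  by (simp add: rpow_def powr_mono2)

lemma rpow_half_squared: "0 \<le> x \<Longrightarrow> rpow x (e / 2) * rpow x (e / 2) = rpow x e"
  by (simp add: rpow_def powr_add [symmetric])

lemma continuous_on_rpow:
  assumes "0 \<le> e"
  shows "continuous_on {0..} (\<lambda>x. rpow x e)"
proof (cases "e = 0")
  case True
  then show ?thesis by (simp add: rpow_def)
next
  case False
  have "continuous_on {0..} (\<lambda>x::real. x powr e)"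
    using False assms by (intro continuous_on_powr') (auto intro!: continuous_intros)
  then show ?thesis
    using False by (simp add: rpow_def)
qed

lemma two_mult_le_add_of_square_le:
  fixes c u v :: real
  assumes "0 \<le> u" "0 \<le> v" "c * c \<le> u * v"
  shows "2 * c \<le> u + v"
proof -
  have "4 * (u * v) \<le> (u + v)\<^sup>2"
    using sum_squares_ge_zero [of "u - v" 0] by (simp add: power2_eq_square algebra_simps)
  with assms(3) have "(2 * c)\<^sup>2 \<le> (u + v)\<^sup>2"
    by (simp add: power2_eq_square)
  then show ?thesis
    by (rule power2_le_imp_le) (use assms(1,2) in simp)
qed

lemma integral_reflect_Icc:
  fixes f :: "real \<Rightarrow> 'a::banach"
  shows "integral {a..b} (\<lambda>t. f (a + b - t)) = integral {a..b} f"
proof -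
  have "integral {a..b} (\<lambda>t. f (a + b - t)) = integral {-b..-a} (\<lambda>x. f (a + b + x))"
    using Henstock_Kurzweil_Integration.integral_reflect_real [of "-a" "-b" "\<lambda>x. f (a + b + x)"] by simp
  also have "\<dots> = integral {a..b} f"
    using integral_shift_Icc_real [of "-b" "-a" f "a + b"] by (simp add: o_def add_ac)
  finally show ?thesis .
qed

lemma integral_ge_of_reflection_sum_ge:
  fixes f :: "real \<Rightarrow> real"
  assumes "a \<le> b" and f: "continuous_on {a..b} f"
    and sum_ge: "\<And>t. t \<in> {a..b} \<Longrightarrow> 2 * c \<le> f t + f (a + b - t)"
  shows "(b - a) * c \<le> integral {a..b} f"
proof -
  have int_f: "f integrable_on {a..b}"
    using f by (rule integrable_continuous_interval)
  have "continuous_on {a..b} (\<lambda>t. f (a + b - t))"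
    by (rule continuous_on_compose2 [OF f]) (auto intro!: continuous_intros)
  then have int_refl: "(\<lambda>t. f (a + b - t)) integrable_on {a..b}"
    by (rule integrable_continuous_interval)
  have "(b - a) * (2 * c) = integral {a..b} (\<lambda>t. 2 * c)"
    using \<open>a \<le> b\<close> by simp
  also have "\<dots> \<le> integral {a..b} (\<lambda>t. f t + f (a + b - t))"
    by (intro integral_le integrable_add int_f int_refl sum_ge) auto
  also have "\<dots> = 2 * integral {a..b} f"
    using integral_add [OF int_f int_refl] integral_reflect_Icc [of a b f] by simp
  finally show ?thesis by simp
qed

definition gamma_integrand :: "real \<Rightarrow> real \<Rightarrow> real" where
  "gamma_integrand \<alpha> t = rpow t (\<alpha> - 1) * exp (- t)"

lemma continuous_on_gamma_integrand:
  "\<alpha> \<ge> 1 \<Longrightarrow> continuous_on {0..} (gamma_integrand \<alpha>)"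
  unfolding gamma_integrand_def
  by (intro continuous_intros continuous_on_rpow) auto

lemma gamma_integrand_nonneg: "0 \<le> gamma_integrand \<alpha> t"
  by (simp add: gamma_integrand_def rpow_nonneg)

lemma lower_inc_gamma_diff:
  assumes "\<alpha> \<ge> 1" "0 \<le> a" "a \<le> b"
  shows "lower_inc_gamma \<alpha> b - lower_inc_gamma \<alpha> a = integral {a..b} (gamma_integrand \<alpha>)"
proof -
  have "gamma_integrand \<alpha> integrable_on {0..b}"
    by (intro integrable_continuous_interval continuous_on_subset
        [OF continuous_on_gamma_integrand [OF assms(1)]]) auto
  then have "integral {0..a} (gamma_integrand \<alpha>) + integral {a..b} (gamma_integrand \<alpha>)
      = integral {0..b} (gamma_integrand \<alpha>)"
    using assms by (intro Henstock_Kurzweil_Integration.integral_combine) auto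
  then show ?thesis
    unfolding lower_inc_gamma_def gamma_integrand_def [abs_def] by simp
qed

lemma gamma_integrand_reflection_product_ge:
  assumes "\<alpha> \<ge> 1" "0 \<le> a" "a \<le> t" "t \<le> b"
  shows "rpow (a * b) (\<alpha> - 1) * exp (- (a + b))
           \<le> gamma_integrand \<alpha> t * gamma_integrand \<alpha> (a + b - t)"
proof -
  have "a * b \<le> t * (a + b - t)"
    using mult_nonneg_nonneg [of "t - a" "b - t"] assms by (simp add: algebra_simps)
  then have "rpow (a * b) (\<alpha> - 1) \<le> rpow t (\<alpha> - 1) * rpow (a + b - t) (\<alpha> - 1)"
    using assms rpow_mono [of "a * b" "t * (a + b - t)" "\<alpha> - 1"] by (simp add: rpow_mult)
  then have "rpow (a * b) (\<alpha> - 1) * exp (- (a + b))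
      \<le> rpow t (\<alpha> - 1) * rpow (a + b - t) (\<alpha> - 1) * exp (- (a + b))"
    by (rule mult_right_mono) simp
  also have "\<dots> = gamma_integrand \<alpha> t * gamma_integrand \<alpha> (a + b - t)"
    by (simp add: gamma_integrand_def mult_ac flip: exp_add)
  finally show ?thesis .
qed

lemma lower_inc_gamma_increment_ge:
  assumes "\<alpha> \<ge> 1" "0 \<le> a" "a \<le> b"
  shows "(b - a) * rpow (a * b) ((\<alpha> - 1) / 2) * exp (- (a + b) / 2)
           \<le> lower_inc_gamma \<alpha> b - lower_inc_gamma \<alpha> a"
proof -
  define c where "c = rpow (a * b) ((\<alpha> - 1) / 2) * exp (- (a + b) / 2)"
  have c_squared: "c * c = rpow (a * b) (\<alpha> - 1) * exp (- (a + b))"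
    unfolding c_def using rpow_half_squared [of "a * b" "\<alpha> - 1"] assms
    by (simp add: mult_ac flip: exp_add)
  have "2 * c \<le> gamma_integrand \<alpha> t + gamma_integrand \<alpha> (a + b - t)" if "t \<in> {a..b}" for t
  proof (rule two_mult_le_add_of_square_le)
    show "c * c \<le> gamma_integrand \<alpha> t * gamma_integrand \<alpha> (a + b - t)"
      unfolding c_squared using that assms by (intro gamma_integrand_reflection_product_ge) auto
  qed (rule gamma_integrand_nonneg)+
  moreover have "continuous_on {a..b} (gamma_integrand \<alpha>)"
    using assms by (intro continuous_on_subset [OF continuous_on_gamma_integrand]) auto
  ultimately have "(b - a) * c \<le> integral {a..b} (gamma_integrand \<alpha>)"
    using assms(3) by (intro integral_ge_of_reflection_sum_ge)
  then show ?thesis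
    using lower_inc_gamma_diff [OF assms] by (simp add: c_def mult.assoc)
qed

theorem mainTheorem14:
  fixes \<alpha> a b :: real
  assumes "\<alpha> \<ge> 1" and "a \<ge> 0" and "b \<ge> 0"
  shows "\<bar>lower_inc_gamma \<alpha> a - lower_inc_gamma \<alpha> b\<bar>
           \<ge> \<bar>a - b\<bar> * rpow (a * b) ((\<alpha> - 1) / 2) * exp (- (a + b) / 2)"
proof (cases "a \<le> b")
  case True
  then show ?thesis
    using lower_inc_gamma_increment_ge [OF assms(1,2) True] by (simp add: abs_if)
next
  case False
  then show ?thesis
    using lower_inc_gamma_increment_ge [OF assms(1,3), of a]
    by (simp add: abs_if mult.commute add.commute)
qed

end
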